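(* Let $G$ be a 4-dimensional connected Lie group with a global basis $\{X_1,\dots,X_4\}$ of left invariant vector fields satisfying, for real constants $\lambda_1,\dots,\lambda_4$, $[X_1,X_2]=\lambda_1X_1+\lambda_2X_2$, $[X_1,X_3]=\lambda_3X_2-\lambda_1X_4$, $[X_1,X_4]=-\lambda_3X_1-\lambda_2X_4$, $[X_2,X_3]=\lambda_4X_2+\lambda_1X_3$, $[X_2,X_4]=-\lambda_4X_1+\lambda_2X_3$, $[X_3,X_4]=\lambda_3X_3+\lambda_4X_4$, and let $JX_1=X_3$, $JX_2=X_4$, $JX_3=-X_1$, $JX_4=-X_2$, $g(X_1,X_1)=g(X_2,X_2)=-g(X_3,X_3)=-g(X_4,X_4)=1$, $g(X_i,X_j)=0$ for $i\ne j$. Then $(G,J,g)$ is an isotropic K\"ahler manifold with Norden metric if and only if $\lambda_1^2+\lambda_2^2-\lambda_3^2-\lambda_4^2=0$.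
   Context: For an almost complex manifold with Norden metric $(M,J,g)$ ($J^2=-\mathrm{Id}$, $g(Jx,Jy)=-g(x,y)$) with Levi-Civita connection $\nabla$, the square norm of $\nabla J$ is $\|\nabla J\|^2=g^{ij}g^{ks}g((\nabla_{e_i}J)e_k,(\nabla_{e_j}J)e_s)$, where $\{e_i\}$ is any basis of a tangent space and $g^{ij}$ are the components of the inverse matrix of $g$. The manifold is called isotropic K\"ahler if $\|\nabla J\|^2=0$. *)

theory Defs
  imports Complex_Main
begin

text \<open>Left-invariant setting: the Lie algebra of G is identified with R^4 via the
basis X_1..X_4, here indexed 0..3. Vectors are functions nat => real, only the
entries with index < 4 being relevant.\<close>

type_synonym vec = "nat \<Rightarrow> real"

definition basis :: "nat \<Rightarrow> vec" where
  "basis i = (\<lambda>k. if k = i then 1 else 0)"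

text \<open>Structure constants: strc lam l i j = coefficient of X_(l+1) in [X_(i+1), X_(j+1)],
lam 1 .. lam 4 being lambda_1 .. lambda_4.\<close>
definition brtab :: "(nat \<Rightarrow> real) \<Rightarrow> nat \<Rightarrow> nat \<Rightarrow> vec" where
  "brtab lam i j =
    (if (i, j) = (0, 1) then (\<lambda>l. if l = 0 then lam 1 else if l = 1 then lam 2 else 0)
     else if (i, j) = (0, 2) then (\<lambda>l. if l = 1 then lam 3 else if l = 3 then - lam 1 else 0)
     else if (i, j) = (0, 3) then (\<lambda>l. if l = 0 then - lam 3 else if l = 3 then - lam 2 else 0)
     else if (i, j) = (1, 2) then (\<lambda>l. if l = 1 then lam 4 else if l = 2 then lam 1 else 0)
     else if (i, j) = (1, 3) then (\<lambda>l. if l = 0 then - lam 4 else if l = 2 then lam 2 else 0)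
     else if (i, j) = (2, 3) then (\<lambda>l. if l = 2 then lam 3 else if l = 3 then lam 4 else 0)
     else (\<lambda>l. 0))"

definition strc :: "(nat \<Rightarrow> real) \<Rightarrow> nat \<Rightarrow> nat \<Rightarrow> nat \<Rightarrow> real" where
  "strc lam l i j =
    (if i < j then brtab lam i j l else if j < i then - brtab lam j i l else 0)"

definition bracket :: "(nat \<Rightarrow> nat \<Rightarrow> nat \<Rightarrow> real) \<Rightarrow> vec \<Rightarrow> vec \<Rightarrow> vec" where
  "bracket C v w = (\<lambda>l. \<Sum>i<4. \<Sum>j<4. v i * w j * C l i j)"

definition jacobi :: "(nat \<Rightarrow> nat \<Rightarrow> nat \<Rightarrow> real) \<Rightarrow> bool" where
  "jacobi C \<longleftrightarrow> (\<forall>i<4. \<forall>j<4. \<forall>k<4. \<forall>l<4.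
     bracket C (basis i) (bracket C (basis j) (basis k)) l
   + bracket C (basis j) (bracket C (basis k) (basis i)) l
   + bracket C (basis k) (bracket C (basis i) (basis j)) l = 0)"

definition eps :: "nat \<Rightarrow> real" where
  "eps i = (if i < 2 then 1 else -1)"

definition gmat :: "nat \<Rightarrow> nat \<Rightarrow> real" where
  "gmat i j = (if i = j then eps i else 0)"

definition gm :: "vec \<Rightarrow> vec \<Rightarrow> real" where
  "gm v w = (\<Sum>i<4. \<Sum>j<4. gmat i j * v i * w j)"

definition ginv :: "nat \<Rightarrow> nat \<Rightarrow> real" where
  "ginv i j = (if i = j then 1 / eps i else 0)"

definition Jop :: "vec \<Rightarrow> vec" where
  "Jop v = (\<lambda>k. if k = 0 then - v 2 else if k = 1 then - v 3
                else if k = 2 then v 0 else if k = 3 then v 1 else 0)"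

text \<open>Levi-Civita connection on left-invariant vector fields (Koszul formula):
2 g(nabla_X Y, Z) = g([X,Y],Z) - g([Y,Z],X) + g([Z,X],Y).\<close>
definition LC :: "(nat \<Rightarrow> nat \<Rightarrow> nat \<Rightarrow> real) \<Rightarrow> vec \<Rightarrow> vec \<Rightarrow> vec" where
  "LC C x y = (\<lambda>k. \<Sum>m<4. ginv k m * (1/2) *
      (gm (bracket C x y) (basis m) - gm (bracket C y (basis m)) x
       + gm (bracket C (basis m) x) y))"

definition nablaJ :: "(nat \<Rightarrow> nat \<Rightarrow> nat \<Rightarrow> real) \<Rightarrow> vec \<Rightarrow> vec \<Rightarrow> vec" where
  "nablaJ C x y = (\<lambda>k. LC C x (Jop y) k - Jop (LC C x y) k)"

definition sqnorm_nablaJ :: "(nat \<Rightarrow> nat \<Rightarrow> nat \<Rightarrow> real) \<Rightarrow> real" where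
  "sqnorm_nablaJ C = (\<Sum>i<4. \<Sum>j<4. \<Sum>k<4. \<Sum>s<4.
      ginv i j * ginv k s * gm (nablaJ C (basis i) (basis k)) (nablaJ C (basis j) (basis s)))"

definition almost_norden :: bool where
  "almost_norden \<longleftrightarrow> (\<forall>v. Jop (Jop v) = (\<lambda>k. if k < 4 then - v k else 0))
     \<and> (\<forall>v w. gm (Jop v) (Jop w) = - gm v w)"

definition isotropic_kaehler :: "(nat \<Rightarrow> nat \<Rightarrow> nat \<Rightarrow> real) \<Rightarrow> bool" where
  "isotropic_kaehler C \<longleftrightarrow> almost_norden \<and> sqnorm_nablaJ C = 0"

end

theory Submission
  imports Defs
begin

text \<open>Since g and J have constant components in the left-invariant frame, the square norm
of \<open>\<nabla>J\<close> is a polynomial in the structure constants; a direct computation gives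
\<open>\<parallel>\<nabla>J\<parallel>\<^sup>2 = -4(\<lambda>\<^sub>1\<^sup>2 + \<lambda>\<^sub>2\<^sup>2 - \<lambda>\<^sub>3\<^sup>2 - \<lambda>\<^sub>4\<^sup>2)\<close>.
This identity holds for all \<open>\<lambda>\<close>.\<close>

lemma sum_lessThan_4: "(\<Sum>i<4::nat. f i) = f 0 + f 1 + f 2 + (f 3 :: real)"
  by (simp add: eval_nat_numeral)

lemma gm_diagonal: "gm v w = (\<Sum>i<4. eps i * v i * w i)"
  unfolding gm_def gmat_def by (simp add: if_distrib[of "\<lambda>x. x * _"] sum.delta cong: if_cong)

lemma sqnorm_nablaJ_diagonal:
  "sqnorm_nablaJ C =
     (\<Sum>i<4. \<Sum>k<4. eps i * eps k * gm (nablaJ C (basis i) (basis k)) (nablaJ C (basis i) (basis k)))"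
proof -
  have ginv_eps: "ginv i j = (if i = j then eps i else 0)" for i j
    by (simp add: ginv_def eps_def)
  have sum_if_const: "(\<Sum>k<4. if P then f k else 0) = (if P then (\<Sum>k<4. f k) else (0::real))"
    for P and f :: "nat \<Rightarrow> real"
    by simp
  show ?thesis
    unfolding sqnorm_nablaJ_def ginv_eps
    by (simp add: if_distrib[of "\<lambda>x. x * _"] if_distrib[of "\<lambda>x. _ * x"] sum.delta'
        sum_if_const cong: if_cong)
qed

lemma Jop_Jop: "Jop (Jop v) = (\<lambda>k. if k < 4 then - v k else 0)"
proof
  fix k show "Jop (Jop v) k = (if k < 4 then - v k else 0)"
    by (cases "k < 4") (auto simp: Jop_def eval_nat_numeral less_Suc_eq)
qed

lemma gm_Jop_Jop: "gm (Jop v) (Jop w) = - gm v w"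
  by (simp add: Jop_def gm_diagonal sum_lessThan_4 eps_def)

lemma almost_norden: almost_norden
  unfolding almost_norden_def using Jop_Jop gm_Jop_Jop by blast

lemma sqnorm_nablaJ_strc:
  "sqnorm_nablaJ (strc lam) = -4 * ((lam 1)^2 + (lam 2)^2 - (lam 3)^2 - (lam 4)^2)"
  apply (simp add: sqnorm_nablaJ_diagonal sum_lessThan_4 eps_def)
  apply (simp add: nablaJ_def LC_def gm_diagonal sum_lessThan_4 ginv_def eps_def
      bracket_def basis_def Jop_def strc_def brtab_def)
  apply (simp add: algebra_simps power2_eq_square)
  done

theorem proposition3p4:
  fixes lam :: "nat \<Rightarrow> real"
  assumes "jacobi (strc lam)"
  shows "isotropic_kaehler (strc lam) \<longleftrightarrow>
         (lam 1)^2 + (lam 2)^2 - (lam 3)^2 - (lam 4)^2 = 0"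
  unfolding isotropic_kaehler_def using almost_norden sqnorm_nablaJ_strc[of lam] by auto

end
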